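(* For every $\varepsilon>0$ there is $\delta>0$ such that the following holds. Let $G=(V_1,V_2,E)$ be a bipartite graph with $|V_1|\ge|V_2|/2$, and let $\mathcal P=\{x_0,x_1,\ldots,x_{|V_2|^{0.5}}\}$ be an $\varepsilon$-pair-star of size $|V_2|^{0.5}$ rooted at $x_0$ associated to $V_1$. If $W\subset V_2$ is chosen uniformly at random among all subsets of $V_2$, then $\mathbb P\big(|A^W_{\mathcal P}|\ge\delta|V_2|^{0.5}\big)\ge 3/4$, where $$A^W_{\mathcal P}:=\{d^W(x_i)-d^W(x_0): i\in[|V_2|^{0.5}]\}\cap[-3|V_2|^{0.5},3|V_2|^{0.5}].$$
   Context: A bipartite graph $G=(V_1,V_2,E)$ has vertex set $V_1\sqcup V_2$ and edge set $E\subset V_1\times V_2$; $N(v)$ is the neighbourhood and $d(v)$ the degree of $v$, and for $S\subset V_2$, $d^S(v)=|N(v)\cap S|$. For $u,v\in V_1$, $\mathrm{div}(u,v)=N(u)\triangle N(v)$. An $\varepsilon$-pair-star of size $k$ associated to $V_1$ rooted at $x_0$ is a set $\{x_0,x_1,\ldots,x_k\}\subset V_1$ with $|d(x_j)-d(x_0)|\le|V_2|^{0.5}$ for all $j\in[k]$ and $|\mathrm{div}(x_i,x_j)|\ge\varepsilon|V_2|$ for all $i\ne j$ in $\{0,\ldots,k\}$. Floors/ceilings of non-integer sizes are ignored. *)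

theory Defs
  imports Main Complex_Main
begin

text \<open>A bipartite graph is given by finite vertex sets V1, V2 and an edge set E \<subseteq> V1 \<times> V2.\<close>

definition nbhd :: "('a \<times> 'b) set \<Rightarrow> 'a \<Rightarrow> 'b set" where
  "nbhd E v = {w. (v, w) \<in> E}"

definition deg :: "('a \<times> 'b) set \<Rightarrow> 'a \<Rightarrow> nat" where
  "deg E v = card (nbhd E v)"

definition degS :: "('a \<times> 'b) set \<Rightarrow> 'b set \<Rightarrow> 'a \<Rightarrow> nat" where
  "degS E S v = card (nbhd E v \<inter> S)"

definition divg :: "('a \<times> 'b) set \<Rightarrow> 'a \<Rightarrow> 'a \<Rightarrow> 'b set" where
  "divg E u v = (nbhd E u - nbhd E v) \<union> (nbhd E v - nbhd E u)"

definition pair_star ::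
  "real \<Rightarrow> 'a set \<Rightarrow> 'b set \<Rightarrow> ('a \<times> 'b) set \<Rightarrow> 'a set \<Rightarrow> 'a \<Rightarrow> nat \<Rightarrow> bool" where
  "pair_star eps V1 V2 E P x0 k \<longleftrightarrow>
     P \<subseteq> V1 \<and> x0 \<in> P \<and> card P = k + 1 \<and>
     (\<forall>x\<in>P - {x0}. \<bar>real (deg E x) - real (deg E x0)\<bar> \<le> sqrt (real (card V2))) \<and>
     (\<forall>u\<in>P. \<forall>v\<in>P. u \<noteq> v \<longrightarrow> real (card (divg E u v)) \<ge> eps * real (card V2))"

definition AWP :: "('a \<times> 'b) set \<Rightarrow> 'b set \<Rightarrow> 'a set \<Rightarrow> 'a \<Rightarrow> 'b set \<Rightarrow> int set" where
  "AWP E V2 P x0 W =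
     {int (degS E W x) - int (degS E W x0) | x. x \<in> P - {x0}}
     \<inter> {z. \<bar>real_of_int z\<bar> \<le> 3 * sqrt (real (card V2))}"

end

theory Submission
  imports Defs
begin

text \<open>
  For a leaf x of the star, 2 (d^W(x) - d^W(x0)) - (d(x) - d(x0)) is a sum of independent
  random signs over the symmetric difference of N(x) and N(x0), so its second moment is at most
  |V2| = n; as the degrees of x and x0 differ by at most sqrt n, Chebyshev's inequality bounds
  the probability that |d^W(x) - d^W(x0)| > 3 sqrt n by 1/25.  Two leaves x, y give the same
  difference only if W meets N(x) - N(y) and N(y) - N(x) equally often; this is a central
  binomial event of probability at most |div(x, y)|^(-1/2) \<le> (eps sqrt n)^(-1).  Keeping only
  about eps sqrt n / 12 leaves, the expected number of leaves that are far or collide with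
  another one is less than an eighth of them, and Markov's inequality shows that for at least
  3/4 of all W more than half of these leaves give distinct differences lying in A^W_P.
\<close>

subsection \<open>Central binomial coefficients\<close>

lemma central_binomial_Suc: "2 * Suc n choose Suc n = 2 * (Suc (2 * n) choose n)"
proof -
  have "Suc (2 * n) choose Suc n = Suc (2 * n) choose n"
    using central_binomial_odd[of "Suc (2 * n)"] by simp
  then show ?thesis by simp
qed

lemma Suc_times_central_binomial_Suc:
  "Suc n * (2 * Suc n choose Suc n) = 2 * Suc (2 * n) * (2 * n choose n)"
proof -
  have "Suc (2 * n) choose n = Suc (2 * n) choose Suc n"
    using central_binomial_odd[of "Suc (2 * n)"] by simp
  then have "Suc n * (Suc (2 * n) choose n) = Suc (2 * n) * (2 * n choose n)"
    using Suc_times_binomial[of n "2 * n"] by simp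
  then show ?thesis
    unfolding central_binomial_Suc by (simp add: algebra_simps)
qed

text \<open>The factor 3 n + 1, rather than n, is what makes the induction go through.\<close>

lemma central_binomial_upper_bound: "(2 * n choose n)\<^sup>2 * (3 * n + 1) \<le> 16 ^ n"
proof (induction n)
  case 0
  then show ?case by simp
next
  case (Suc n)
  let ?C = "2 * n choose n"
  have "(Suc n)\<^sup>2 * ((2 * Suc n choose Suc n)\<^sup>2 * (3 * Suc n + 1))
      = (Suc n * (2 * Suc n choose Suc n))\<^sup>2 * (3 * n + 4)"
    by (simp only: power_mult_distrib) (simp del: binomial_Suc_Suc)
  also have "\<dots> = 4 * ?C\<^sup>2 * ((2 * n + 1)\<^sup>2 * (3 * n + 4))"
    unfolding Suc_times_central_binomial_Suc
    by (simp only: power_mult_distrib) (simp del: binomial_Suc_Suc)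
  also have "\<dots> \<le> 4 * ?C\<^sup>2 * (4 * (Suc n)\<^sup>2 * (3 * n + 1))"
    by (intro mult_le_mono2) (simp add: power2_eq_square algebra_simps)
  also have "\<dots> = 4 * (Suc n)\<^sup>2 * (4 * (?C\<^sup>2 * (3 * n + 1)))"
    by (simp add: algebra_simps)
  also have "\<dots> \<le> (Suc n)\<^sup>2 * 16 ^ Suc n"
    using Suc.IH by simp
  finally show ?case by simp
qed

lemma binomial_sq_mult_le_four_pow: "(m choose k)\<^sup>2 * m \<le> 4 ^ m"
proof (cases "even m")
  case True
  then obtain n where m: "m = 2 * n" by auto
  have "(m choose k)\<^sup>2 * m \<le> (2 * n choose n)\<^sup>2 * (3 * n + 1)"
    using binomial_maximum'[of n k] m by (intro mult_le_mono power_mono) auto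
  also have "\<dots> \<le> 4 ^ m"
    using central_binomial_upper_bound[of n] by (simp add: m power_mult)
  finally show ?thesis .
next
  case False
  then obtain n where m: "m = Suc (2 * n)" using oddE by fastforce
  have "4 * ((m choose k)\<^sup>2 * m) \<le> 4 * ((m choose n)\<^sup>2 * (3 * Suc n + 1))"
    using binomial_maximum[of m k] m by (intro mult_le_mono2 mult_le_mono power_mono) auto
  also have "\<dots> = (2 * Suc n choose Suc n)\<^sup>2 * (3 * Suc n + 1)"
    unfolding central_binomial_Suc m by (simp add: power_mult_distrib del: binomial_Suc_Suc)
  also have "\<dots> \<le> 4 * 4 ^ m"
    using central_binomial_upper_bound[of "Suc n"] by (simp add: m power_mult)
  finally show ?thesis by simp
qed

lemma binomial_le_two_pow_div_sqrt:
  assumes "m \<ge> 1"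
  shows "real (m choose k) \<le> 2 ^ m / sqrt m"
proof -
  have "(real (m choose k) * sqrt m)\<^sup>2 \<le> (2 ^ m)\<^sup>2"
  proof -
    have "real ((m choose k)\<^sup>2 * m) \<le> real (4 ^ m)"
      using binomial_sq_mult_le_four_pow by (simp only: of_nat_le_iff)
    moreover have "(2 ^ m)\<^sup>2 = (4::real) ^ m"
      by (simp add: power2_eq_square flip: power_mult_distrib)
    ultimately show ?thesis by (simp add: power_mult_distrib)
  qed
  then have "real (m choose k) * sqrt m \<le> 2 ^ m"
    by (rule power2_le_imp_le) simp
  then show ?thesis using assms by (simp add: field_simps)
qed

subsection \<open>Counting subsets by intersection sizes\<close>

lemma card_Pow_card_Int_eq:
  assumes "finite V" "U \<subseteq> V"
  shows "card {W \<in> Pow V. card (U \<inter> W) = j} = 2 ^ (card V - card U) * (card U choose j)"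
proof -
  have fin_U: "finite U" using assms finite_subset by blast
  let ?split = "{X. X \<subseteq> U \<and> card X = j} \<times> Pow (V - U)"
  have "bij_betw (\<lambda>(X, Y). X \<union> Y) ?split {W \<in> Pow V. card (U \<inter> W) = j}"
  proof (rule bij_betw_byWitness[where f' = "\<lambda>W. (U \<inter> W, W - U)"])
    have "U \<inter> (X \<union> Y) = X" if "X \<subseteq> U" "Y \<subseteq> V - U" for X Y
      using that by blast
    then show "(\<lambda>(X, Y). X \<union> Y) ` ?split \<subseteq> {W \<in> Pow V. card (U \<inter> W) = j}"
      using assms(2) by auto
  qed auto
  then have "card {W \<in> Pow V. card (U \<inter> W) = j} = card ?split"
    by (simp add: bij_betw_same_card)
  also have "\<dots> = (card U choose j) * 2 ^ card (V - U)"
    using assms fin_U by (simp add: card_cartesian_product n_subsets card_Pow)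
  finally show ?thesis
    using assms fin_U by (simp add: card_Diff_subset)
qed

text \<open>Toggling membership of every element of B turns the balance condition into a
  condition on the size of a single intersection.\<close>

lemma card_Pow_balanced:
  assumes "finite V" "A \<subseteq> V" "B \<subseteq> V" "A \<inter> B = {}"
  shows "card {W \<in> Pow V. card (A \<inter> W) = card (B \<inter> W)}
       = 2 ^ (card V - card (A \<union> B)) * (card (A \<union> B) choose card B)"
proof -
  define toggle where "toggle W = (W - B) \<union> (B - W)" for W
  have fin: "finite A" "finite B" using assms finite_subset by blast+
  have card_toggle: "card ((A \<union> B) \<inter> toggle W) + card (B \<inter> W) = card (A \<inter> W) + card B" for W
  proof -
    have "(A \<union> B) \<inter> toggle W = (A \<inter> W) \<union> (B - W)" "(A \<inter> W) \<inter> (B - W) = {}"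
      using assms(4) by (auto simp: toggle_def)
    then show ?thesis
      using fin card_Int_Diff[OF fin(2), of W] by (simp add: card_Un_disjoint)
  qed
  have toggle_toggle: "toggle (toggle W) = W" for W
    by (auto simp: toggle_def)
  have "bij_betw toggle {W \<in> Pow V. card (A \<inter> W) = card (B \<inter> W)}
      {W \<in> Pow V. card ((A \<union> B) \<inter> W) = card B}"
  proof (rule bij_betw_byWitness[where f' = toggle])
    have "toggle W \<subseteq> V" if "W \<subseteq> V" for W
      using that assms(3) by (auto simp: toggle_def)
    moreover have "card ((A \<union> B) \<inter> toggle W) = card B \<longleftrightarrow> card (A \<inter> W) = card (B \<inter> W)" for W
      using card_toggle[of W] by linarith
    moreover have "card ((A \<union> B) \<inter> W) = card B \<longleftrightarrow> card (A \<inter> toggle W) = card (B \<inter> toggle W)" for W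
      using card_toggle[of "toggle W"] by (simp add: toggle_toggle) linarith
    ultimately show "toggle ` {W \<in> Pow V. card (A \<inter> W) = card (B \<inter> W)}
        \<subseteq> {W \<in> Pow V. card ((A \<union> B) \<inter> W) = card B}"
      and "toggle ` {W \<in> Pow V. card ((A \<union> B) \<inter> W) = card B}
        \<subseteq> {W \<in> Pow V. card (A \<inter> W) = card (B \<inter> W)}"
      by (auto simp: toggle_toggle)
  qed (simp_all add: toggle_toggle)
  then have "card {W \<in> Pow V. card (A \<inter> W) = card (B \<inter> W)}
      = card {W \<in> Pow V. card ((A \<union> B) \<inter> W) = card B}"
    by (rule bij_betw_same_card)
  also have "\<dots> = 2 ^ (card V - card (A \<union> B)) * (card (A \<union> B) choose card B)"
    using assms by (intro card_Pow_card_Int_eq) auto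
  finally show ?thesis .
qed

lemma card_Pow_card_Int_eq_card_Int_le:
  assumes "finite V" "A \<subseteq> V" "B \<subseteq> V" "A \<noteq> B"
  shows "real (card {W \<in> Pow V. card (A \<inter> W) = card (B \<inter> W)})
       \<le> 2 ^ card V / sqrt (card (sym_diff A B))"
proof -
  have fin: "finite A" "finite B" using assms finite_subset by blast+
  define u where "u = card (sym_diff A B)"
  have "sym_diff A B \<noteq> {}" using assms(4) by blast
  then have u: "1 \<le> u" "u \<le> card V"
    using fin assms by (auto simp: u_def Suc_le_eq card_gt_0_iff intro: card_mono)
  have "card (A \<inter> W) = card (B \<inter> W) \<longleftrightarrow> card ((A - B) \<inter> W) = card ((B - A) \<inter> W)" for W
  proof -
    have "A \<inter> W \<inter> B = B \<inter> W \<inter> A" "A \<inter> W - B = (A - B) \<inter> W" "B \<inter> W - A = (B - A) \<inter> W"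
      by blast+
    then show ?thesis
      using card_Int_Diff[of "A \<inter> W" B] card_Int_Diff[of "B \<inter> W" A] fin by simp
  qed
  then have "card {W \<in> Pow V. card (A \<inter> W) = card (B \<inter> W)}
      = card {W \<in> Pow V. card ((A - B) \<inter> W) = card ((B - A) \<inter> W)}"
    by simp
  also have "\<dots> = 2 ^ (card V - u) * (u choose card (B - A))"
    unfolding u_def using assms by (intro card_Pow_balanced) auto
  finally have "real (card {W \<in> Pow V. card (A \<inter> W) = card (B \<inter> W)})
      = 2 ^ (card V - u) * real (u choose card (B - A))"
    by simp
  also have "\<dots> \<le> 2 ^ (card V - u) * (2 ^ u / sqrt u)"
    by (intro mult_left_mono binomial_le_two_pow_div_sqrt u) simp
  also have "\<dots> = 2 ^ card V / sqrt u"
    using u by (simp add: power_add[symmetric])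
  finally show ?thesis by (simp add: u_def)
qed

subsection \<open>Second moment of intersection sizes\<close>

lemma card_ge_level_mult_le_sum:
  fixes f :: "'a \<Rightarrow> real"
  assumes "finite A" "\<And>a. a \<in> A \<Longrightarrow> 0 \<le> f a"
  shows "real (card {a \<in> A. t \<le> f a}) * t \<le> sum f A"
proof -
  have "real (card {a \<in> A. t \<le> f a}) * t = (\<Sum>a \<in> {a \<in> A. t \<le> f a}. t)" by simp
  also have "\<dots> \<le> (\<Sum>a \<in> {a \<in> A. t \<le> f a}. f a)" by (intro sum_mono) simp
  also have "\<dots> \<le> sum f A" using assms by (intro sum_mono2) auto
  finally show ?thesis .
qed

definition spin :: "'a set \<Rightarrow> 'a \<Rightarrow> real" where
  "spin W v = (if v \<in> W then 1 else -1)"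

lemma sum_Pow_spin_mult:
  assumes "finite V" "u \<in> V"
  shows "(\<Sum>W\<in>Pow V. spin W u * spin W v) = (if u = v then 2 ^ card V else 0)"
proof (cases "u = v")
  case True
  have "spin W u * spin W u = 1" for W by (simp add: spin_def)
  then show ?thesis using True assms by (simp add: card_Pow)
next
  case False
  define flip where "flip W = (if u \<in> W then W - {u} else insert u W)" for W
  have "(\<Sum>W\<in>Pow V. spin W u * spin W v) = (\<Sum>W\<in>Pow V. spin (flip W) u * spin (flip W) v)"
    by (rule sum.reindex_bij_witness[where i = flip and j = flip])
      (use assms in \<open>auto simp: flip_def insert_absorb\<close>)
  also have "\<dots> = - (\<Sum>W\<in>Pow V. spin W u * spin W v)"
    unfolding sum_negf[symmetric] using False by (intro sum.cong refl) (auto simp: flip_def spin_def)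
  finally show ?thesis using False by simp
qed

lemma sum_Pow_square_sum_spin:
  assumes "finite V"
  shows "(\<Sum>W\<in>Pow V. (\<Sum>v\<in>V. c v * spin W v)\<^sup>2) = 2 ^ card V * (\<Sum>v\<in>V. (c v)\<^sup>2)"
proof -
  have "(\<Sum>W\<in>Pow V. (\<Sum>v\<in>V. c v * spin W v)\<^sup>2)
      = (\<Sum>u\<in>V. \<Sum>v\<in>V. c u * c v * (\<Sum>W\<in>Pow V. spin W u * spin W v))"
    by (simp add: power2_eq_square sum_product sum_distrib_left sum.swap[of _ "Pow V"] algebra_simps)
  also have "\<dots> = (\<Sum>u\<in>V. c u * c u * 2 ^ card V)"
    using assms by (simp add: sum_Pow_spin_mult if_distrib cong: if_cong)
  finally show ?thesis by (simp add: sum_distrib_left power2_eq_square mult_ac)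
qed

lemma sum_spin:
  assumes "finite A"
  shows "(\<Sum>v\<in>A. spin W v) = 2 * real (card (A \<inter> W)) - card A"
proof -
  have "(\<Sum>v\<in>A. spin W v) = (\<Sum>v\<in>A. 2 * of_bool (v \<in> W) - 1)"
    by (intro sum.cong) (auto simp: spin_def)
  then show ?thesis
    using assms by (simp add: sum_subtractf sum_distrib_left[symmetric] Int_def)
qed

lemma sum_Pow_card_Int_diff_square:
  assumes "finite V" "A \<subseteq> V" "B \<subseteq> V"
  shows "(\<Sum>W\<in>Pow V. (2 * (real (card (A \<inter> W)) - card (B \<inter> W)) - (real (card A) - card B))\<^sup>2)
       = 2 ^ card V * real (card (sym_diff A B))"
proof -
  define c where "c v = (of_bool (v \<in> A) - of_bool (v \<in> B) :: real)" for v
  have fin: "finite A" "finite B" using assms finite_subset by blast+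
  have "(\<Sum>v\<in>V. c v * spin W v) = (\<Sum>v\<in>A. spin W v) - (\<Sum>v\<in>B. spin W v)" for W
    using assms by (simp add: c_def left_diff_distrib sum_subtractf Int_absorb1 Int_absorb2 Int_def[symmetric])
  then have "(\<Sum>v\<in>V. c v * spin W v)
      = 2 * (real (card (A \<inter> W)) - card (B \<inter> W)) - (real (card A) - card B)" for W
    using fin by (simp add: sum_spin algebra_simps)
  moreover have "(\<Sum>v\<in>V. (c v)\<^sup>2) = card (sym_diff A B)"
  proof -
    have "(\<Sum>v\<in>V. (c v)\<^sup>2) = (\<Sum>v\<in>V. of_bool (v \<in> sym_diff A B))"
      by (intro sum.cong) (auto simp: c_def)
    also have "\<dots> = card (V \<inter> {v. v \<in> sym_diff A B})"
      using assms(1) by (simp only: sum_of_bool_eq)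
    also have "V \<inter> {v. v \<in> sym_diff A B} = sym_diff A B"
      using assms by blast
    finally show ?thesis .
  qed
  ultimately show ?thesis
    using sum_Pow_square_sum_spin[OF assms(1), of c] by simp
qed

lemma card_Pow_card_Int_diff_far_le:
  assumes "finite V" "A \<subseteq> V" "B \<subseteq> V"
    and close: "\<bar>real (card A) - card B\<bar> \<le> sqrt (card V)"
  shows "25 * real (card {W \<in> Pow V. 3 * sqrt (card V) < \<bar>real (card (A \<inter> W)) - card (B \<inter> W)\<bar>})
       \<le> 2 ^ card V"
proof (cases "V = {}")
  case True
  then show ?thesis using assms by simp
next
  case False
  define n where "n = card V"
  define X where "X W = 2 * (real (card (A \<inter> W)) - card (B \<inter> W)) - (real (card A) - card B)" for W
  define Far where "Far = {W \<in> Pow V. 3 * sqrt n < \<bar>real (card (A \<inter> W)) - card (B \<inter> W)\<bar>}"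
  have n: "0 < real n" using False assms(1) by (simp add: n_def card_gt_0_iff)
  have "Far \<subseteq> {W \<in> Pow V. 25 * real n \<le> (X W)\<^sup>2}"
  proof
    fix W assume W: "W \<in> Far"
    then have "3 * sqrt n < \<bar>real (card (A \<inter> W)) - card (B \<inter> W)\<bar>"
      by (simp add: Far_def)
    then have "5 * sqrt n \<le> \<bar>X W\<bar>"
      using close unfolding X_def n_def by (auto simp: abs_if split: if_splits)
    then have "(5 * sqrt n)\<^sup>2 \<le> (X W)\<^sup>2"
      using power_mono[of "5 * sqrt n" "\<bar>X W\<bar>" 2] by simp
    then show "W \<in> {W \<in> Pow V. 25 * real n \<le> (X W)\<^sup>2}"
      using W by (simp add: Far_def power_mult_distrib)
  qed
  then have "real (card Far) * (25 * real n) \<le> real (card {W \<in> Pow V. 25 * real n \<le> (X W)\<^sup>2}) * (25 * real n)"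
    using assms(1) by (intro mult_right_mono) (auto intro: card_mono)
  also have "\<dots> \<le> (\<Sum>W\<in>Pow V. (X W)\<^sup>2)"
    using assms(1) by (intro card_ge_level_mult_le_sum) auto
  also have "\<dots> = 2 ^ n * real (card (sym_diff A B))"
    unfolding X_def n_def using assms(1-3) by (rule sum_Pow_card_Int_diff_square)
  also have "\<dots> \<le> 2 ^ n * real n"
    using assms by (auto simp: n_def intro!: card_mono)
  finally show ?thesis using n by (simp add: Far_def n_def)
qed

subsection \<open>Many distinct values\<close>

lemma card_le_card_image_add_defects:
  assumes "finite Q"
  shows "card Q \<le> card (f ` {x \<in> Q. P x}) + card {x \<in> Q. \<not> P x}
                    + (\<Sum>x\<in>Q. card {y \<in> Q - {x}. f y = f x})"
proof -
  define G where "G = {x \<in> Q. P x \<and> (\<forall>y \<in> Q - {x}. f y \<noteq> f x)}"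
  define C where "C = {x \<in> Q. \<exists>y \<in> Q - {x}. f y = f x}"
  have "inj_on f G" by (rule inj_onI) (auto simp: G_def)
  then have "card G \<le> card (f ` {x \<in> Q. P x})"
    using assms by (auto simp: G_def card_image[symmetric] intro: card_mono)
  moreover have "card C \<le> (\<Sum>x\<in>Q. card {y \<in> Q - {x}. f y = f x})"
  proof -
    have "card C = (\<Sum>x\<in>C. 1)" by simp
    also have "\<dots> \<le> (\<Sum>x\<in>C. card {y \<in> Q - {x}. f y = f x})"
      using assms by (intro sum_mono) (auto simp: C_def Suc_le_eq card_gt_0_iff)
    also have "\<dots> \<le> (\<Sum>x\<in>Q. card {y \<in> Q - {x}. f y = f x})"
      using assms by (intro sum_mono2) (auto simp: C_def)
    finally show ?thesis .
  qed
  moreover have "card Q \<le> card G + card {x \<in> Q. \<not> P x} + card C"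
  proof -
    have "Q \<subseteq> G \<union> {x \<in> Q. \<not> P x} \<union> C" by (auto simp: G_def C_def)
    then have "card Q \<le> card (G \<union> {x \<in> Q. \<not> P x} \<union> C)"
      using assms by (intro card_mono) (auto simp: G_def C_def)
    then show ?thesis by (meson card_Un_le add_le_mono1 order_trans)
  qed
  ultimately show ?thesis by linarith
qed

lemma sum_card_filter_swap:
  assumes "finite A" "finite B"
  shows "(\<Sum>b\<in>B. card {a \<in> A. R a b}) = (\<Sum>a\<in>A. card {b \<in> B. R a b})"
proof -
  have "card {a \<in> A. R a b} = (\<Sum>a\<in>A. of_bool (R a b))" for b
    using assms by (simp add: Int_def conj_commute)
  moreover have "card {b \<in> B. R a b} = (\<Sum>b\<in>B. of_bool (R a b))" for a
    using assms by (simp add: Int_def conj_commute)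
  ultimately show ?thesis by (simp add: sum.swap[of _ B])
qed

lemma sum_card_defects_swap:
  assumes "finite \<Omega>" "finite Q"
  shows "(\<Sum>\<omega>\<in>\<Omega>. card {x \<in> Q. \<not> good x \<omega>} + (\<Sum>x\<in>Q. card {y \<in> Q - {x}. f y \<omega> = f x \<omega>}))
       = (\<Sum>x\<in>Q. card {\<omega> \<in> \<Omega>. \<not> good x \<omega>} + (\<Sum>y\<in>Q - {x}. card {\<omega> \<in> \<Omega>. f y \<omega> = f x \<omega>}))"
proof -
  have "(\<Sum>\<omega>\<in>\<Omega>. \<Sum>x\<in>Q. card {y \<in> Q - {x}. f y \<omega> = f x \<omega>})
      = (\<Sum>x\<in>Q. \<Sum>\<omega>\<in>\<Omega>. card {y \<in> Q - {x}. f y \<omega> = f x \<omega>})"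
    by (rule sum.swap)
  also have "\<dots> = (\<Sum>x\<in>Q. \<Sum>y\<in>Q - {x}. card {\<omega> \<in> \<Omega>. f y \<omega> = f x \<omega>})"
    using assms by (intro sum.cong refl sum_card_filter_swap) auto
  finally show ?thesis
    unfolding sum.distrib sum_card_filter_swap[OF assms(2,1)] by simp
qed

lemma card_many_distinct_good_values:
  fixes f :: "'q \<Rightarrow> 'w \<Rightarrow> 'v" and good :: "'q \<Rightarrow> 'w \<Rightarrow> bool" and p q :: real
  assumes fin: "finite \<Omega>" "finite Q"
    and bad: "\<And>x. x \<in> Q \<Longrightarrow> real (card {\<omega> \<in> \<Omega>. \<not> good x \<omega>}) \<le> p * card \<Omega>"
    and coll: "\<And>x y. x \<in> Q \<Longrightarrow> y \<in> Q \<Longrightarrow> x \<noteq> y \<Longrightarrow>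
                 real (card {\<omega> \<in> \<Omega>. f x \<omega> = f y \<omega>}) \<le> q * card \<Omega>"
    and small: "8 * (p + (real (card Q) - 1) * q) \<le> 1"
  shows "3 / 4 * card \<Omega> \<le> card {\<omega> \<in> \<Omega>. card Q \<le> 2 * card ((\<lambda>x. f x \<omega>) ` {x \<in> Q. good x \<omega>})}"
proof -
  define m where "m = card Q"
  define defects where "defects \<omega> = card {x \<in> Q. \<not> good x \<omega>}
      + (\<Sum>x\<in>Q. card {y \<in> Q - {x}. f y \<omega> = f x \<omega>})" for \<omega>
  define Bad where "Bad = {\<omega> \<in> \<Omega>. \<not> card Q \<le> 2 * card ((\<lambda>x. f x \<omega>) ` {x \<in> Q. good x \<omega>})}"
  have expected_defects: "real (sum defects \<Omega>) \<le> m * card \<Omega> / 8"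
  proof -
    have "sum defects \<Omega> = (\<Sum>x\<in>Q. card {\<omega> \<in> \<Omega>. \<not> good x \<omega>}
        + (\<Sum>y\<in>Q - {x}. card {\<omega> \<in> \<Omega>. f y \<omega> = f x \<omega>}))"
      unfolding defects_def using fin by (rule sum_card_defects_swap)
    then have "real (sum defects \<Omega>) = (\<Sum>x\<in>Q. real (card {\<omega> \<in> \<Omega>. \<not> good x \<omega>})
        + (\<Sum>y\<in>Q - {x}. real (card {\<omega> \<in> \<Omega>. f y \<omega> = f x \<omega>})))"
      by simp
    also have "\<dots> \<le> (\<Sum>x\<in>Q. p * card \<Omega> + (\<Sum>y\<in>Q - {x}. q * card \<Omega>))"
      using bad coll by (intro sum_mono add_mono) auto
    also have "\<dots> = m * card \<Omega> * (p + real (m - 1) * q)"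
      using fin by (simp add: m_def card_Diff_singleton algebra_simps)
    also have "\<dots> = m * card \<Omega> * (p + (real m - 1) * q)"
      by (cases m) simp_all
    also have "\<dots> \<le> m * card \<Omega> / 8"
      using mult_left_mono[OF small, of "real m * card \<Omega>"] by (simp add: m_def algebra_simps)
    finally show ?thesis .
  qed
  have "real (card Bad) \<le> card \<Omega> / 4"
  proof (cases "m = 0")
    case True
    then show ?thesis by (simp add: Bad_def m_def)
  next
    case False
    have m_le: "m \<le> card ((\<lambda>x. f x \<omega>) ` {x \<in> Q. good x \<omega>}) + defects \<omega>" for \<omega>
      using card_le_card_image_add_defects[OF fin(2)] by (simp add: defects_def m_def add.assoc)
    have "m \<le> 2 * defects \<omega>" if "\<not> m \<le> 2 * card ((\<lambda>x. f x \<omega>) ` {x \<in> Q. good x \<omega>})" for \<omega>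
      using that m_le[of \<omega>] by linarith
    then have "Bad \<subseteq> {\<omega> \<in> \<Omega>. m / 2 \<le> real (defects \<omega>)}"
      unfolding Bad_def m_def by (force simp: field_simps simp flip: of_nat_le_iff)
    then have "real (card Bad) * (m / 2) \<le> real (card {\<omega> \<in> \<Omega>. m / 2 \<le> real (defects \<omega>)}) * (m / 2)"
      using fin by (intro mult_right_mono) (auto intro: card_mono)
    also have "\<dots> \<le> real (sum defects \<Omega>)"
      using card_ge_level_mult_le_sum[OF fin(1), of "\<lambda>\<omega>. real (defects \<omega>)" "m / 2"]
      by (simp only: of_nat_sum of_nat_0_le_iff)
    also have "\<dots> \<le> m * card \<Omega> / 8"
      by (rule expected_defects)
    finally show ?thesis using False by (simp add: field_simps)
  qed
  moreover have "card {\<omega> \<in> \<Omega>. card Q \<le> 2 * card ((\<lambda>x. f x \<omega>) ` {x \<in> Q. good x \<omega>})}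
      = card \<Omega> - card Bad"
    using fin by (subst card_Diff_subset[symmetric]) (auto simp: Bad_def intro: arg_cong[where f = card])
  moreover have "card Bad \<le> card \<Omega>"
    using fin by (auto simp: Bad_def intro: card_mono)
  ultimately show ?thesis by (simp add: of_nat_diff)
qed

subsection \<open>Degree differences in a pair star\<close>

lemma nbhd_subset: "E \<subseteq> V1 \<times> V2 \<Longrightarrow> nbhd E x \<subseteq> V2"
  by (auto simp: nbhd_def)

lemma card_Pow_degS_diff_far_le:
  assumes "finite V2" "E \<subseteq> V1 \<times> V2"
    and "\<bar>real (deg E x) - real (deg E x0)\<bar> \<le> sqrt (card V2)"
  shows "real (card {W \<in> Pow V2. \<not> \<bar>real_of_int (int (degS E W x) - int (degS E W x0))\<bar> \<le> 3 * sqrt (card V2)})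
       \<le> 1 / 25 * 2 ^ card V2"
  using card_Pow_card_Int_diff_far_le[OF assms(1) nbhd_subset[OF assms(2)] nbhd_subset[OF assms(2)], of x x0] assms(3)
  by (simp add: deg_def degS_def not_le)

lemma card_Pow_degS_eq_le:
  fixes eps :: real
  assumes "finite V2" "E \<subseteq> V1 \<times> V2" "0 < eps" "eps \<le> 1" "V2 \<noteq> {}"
    and diverge: "eps * card V2 \<le> card (divg E x y)"
  shows "real (card {W \<in> Pow V2. degS E W x = degS E W y}) \<le> 1 / (eps * sqrt (card V2)) * 2 ^ card V2"
proof -
  have n: "0 < real (card V2)" using assms(1,5) by (simp add: card_gt_0_iff)
  have "(eps * sqrt (card V2))\<^sup>2 = eps * (eps * card V2)"
    by (simp add: power_mult_distrib power2_eq_square)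
  also have "\<dots> \<le> eps * card V2"
    using assms(3,4) n by (intro mult_left_le_one_le) auto
  also have "\<dots> \<le> card (divg E x y)"
    by (rule diverge)
  finally have le_sqrt: "eps * sqrt (card V2) \<le> sqrt (card (divg E x y))"
    by (rule real_le_rsqrt)
  have "0 < eps * card V2" and pos: "0 < eps * sqrt (card V2)"
    using assms(3) n by simp_all
  then have "nbhd E x \<noteq> nbhd E y"
    using diverge by (auto simp: divg_def)
  then have "real (card {W \<in> Pow V2. degS E W x = degS E W y}) \<le> 2 ^ card V2 / sqrt (card (divg E x y))"
    using card_Pow_card_Int_eq_card_Int_le[OF assms(1) nbhd_subset[OF assms(2)] nbhd_subset[OF assms(2)]]
    by (simp add: degS_def divg_def)
  also have "\<dots> \<le> 2 ^ card V2 / (eps * sqrt (card V2))"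
  proof -
    have "0 < sqrt (card (divg E x y))" using le_sqrt pos by linarith
    from mult_pos_pos[OF this pos] show ?thesis by (intro divide_left_mono le_sqrt) simp_all
  qed
  finally show ?thesis by simp
qed

lemma card_Pow_many_distinct_degS_diffs:
  fixes eps :: real
  assumes "finite V2" "E \<subseteq> V1 \<times> V2" "0 < eps" "eps \<le> 1" "V2 \<noteq> {}" "finite Q"
    and deg_close: "\<And>x. x \<in> Q \<Longrightarrow> \<bar>real (deg E x) - real (deg E x0)\<bar> \<le> sqrt (card V2)"
    and diverge: "\<And>x y. x \<in> Q \<Longrightarrow> y \<in> Q \<Longrightarrow> x \<noteq> y \<Longrightarrow> eps * card V2 \<le> card (divg E x y)"
    and few: "12 * (real (card Q) - 1) \<le> eps * sqrt (card V2)"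
  shows "3 / 4 * 2 ^ card V2 \<le> card {W \<in> Pow V2. card Q \<le> 2 * card
           ((\<lambda>x. int (degS E W x) - int (degS E W x0)) `
              {x \<in> Q. \<bar>real_of_int (int (degS E W x) - int (degS E W x0))\<bar> \<le> 3 * sqrt (card V2)})}"
proof -
  define f where "f x W = int (degS E W x) - int (degS E W x0)" for x W
  have pos: "0 < eps * sqrt (card V2)"
    using assms(1,3,5) by (simp add: card_gt_0_iff)
  have "3 / 4 * card (Pow V2) \<le> card {W \<in> Pow V2. card Q \<le> 2 * card
          ((\<lambda>x. f x W) ` {x \<in> Q. \<bar>real_of_int (f x W)\<bar> \<le> 3 * sqrt (card V2)})}"
  proof (rule card_many_distinct_good_values)
    show "real (card {W \<in> Pow V2. \<not> \<bar>real_of_int (f x W)\<bar> \<le> 3 * sqrt (card V2)})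
        \<le> 1 / 25 * card (Pow V2)" if "x \<in> Q" for x
      using card_Pow_degS_diff_far_le[OF assms(1,2) deg_close[OF that]] assms(1) by (simp add: f_def card_Pow)
    show "real (card {W \<in> Pow V2. f x W = f y W}) \<le> 1 / (eps * sqrt (card V2)) * card (Pow V2)"
      if "x \<in> Q" "y \<in> Q" "x \<noteq> y" for x y
      using card_Pow_degS_eq_le[OF assms(1-5) diverge[OF that]] assms(1) by (simp add: f_def card_Pow)
    show "8 * (1 / 25 + (real (card Q) - 1) * (1 / (eps * sqrt (card V2)))) \<le> 1"
      using few pos by (simp add: field_simps)
  qed (use assms in auto)
  then show ?thesis
    using assms(1) by (simp add: f_def card_Pow)
qed

lemma obtain_subset_card_ceiling:
  fixes t :: real
  assumes "0 \<le> t" "t \<le> card Q"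
  obtains Q0 where "Q0 \<subseteq> Q" "real (card Q0) - 1 \<le> t" "t \<le> card Q0"
proof -
  have "nat \<lceil>t\<rceil> \<le> card Q" using assms(2) by (simp add: ceiling_le_iff nat_le_iff)
  then obtain Q0 where "Q0 \<subseteq> Q" "card Q0 = nat \<lceil>t\<rceil>"
    by (rule obtain_subset_with_card_n)
  moreover have "real (nat \<lceil>t\<rceil>) = \<lceil>t\<rceil>" using assms(1) by simp
  ultimately show thesis
    using that ceiling_correct[of t] by auto
qed

lemma pair_star_leaves:
  assumes "pair_star eps V1 V2 E P x0 k"
  shows "finite P" "card (P - {x0}) = k"
proof -
  have "x0 \<in> P" "card P = k + 1" using assms by (auto simp: pair_star_def)
  then show "finite P" "card (P - {x0}) = k"
    by (simp_all add: card_ge_0_finite card_Diff_singleton)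
qed

lemma pair_star_eps_le_1:
  assumes "pair_star eps V1 V2 E P x0 k" "0 < k" "finite V2" "V2 \<noteq> {}" "E \<subseteq> V1 \<times> V2"
  shows "eps \<le> 1"
proof -
  have "P - {x0} \<noteq> {}" using pair_star_leaves(2)[OF assms(1)] assms(2) by (metis card.empty less_irrefl)
  then obtain y where "y \<in> P" "y \<noteq> x0" by blast
  then have "eps * card V2 \<le> card (divg E y x0)"
    using assms(1) by (auto simp: pair_star_def)
  also have "\<dots> \<le> card V2"
    using assms(3) nbhd_subset[OF assms(5)] by (intro of_nat_mono card_mono) (auto simp: divg_def)
  finally show ?thesis
    using assms(3,4) by (simp add: card_gt_0_iff)
qed

lemma card_good_diffs_le_card_AWP:
  assumes "finite P" "Q \<subseteq> P - {x0}"
  shows "card ((\<lambda>x. int (degS E W x) - int (degS E W x0)) `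
           {x \<in> Q. \<bar>real_of_int (int (degS E W x) - int (degS E W x0))\<bar> \<le> 3 * sqrt (card V2)})
       \<le> card (AWP E V2 P x0 W)"
proof (rule card_mono)
  show "finite (AWP E V2 P x0 W)"
    using assms(1) by (rule finite_subset[rotated, OF finite_imageI]) (auto simp: AWP_def)
qed (use assms(2) in \<open>auto simp: AWP_def\<close>)

lemma card_Pow_AWP_large:
  fixes eps :: real
  assumes "0 < eps" "finite V2" "V2 \<noteq> {}" "E \<subseteq> V1 \<times> V2"
    and star: "pair_star eps V1 V2 E P x0 (nat \<lfloor>sqrt (card V2)\<rfloor>)"
  shows "3 / 4 * 2 ^ card V2
       \<le> card {W. W \<subseteq> V2 \<and> eps / 24 * sqrt (card V2) \<le> card (AWP E V2 P x0 W)}"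
proof -
  define S where "S = sqrt (card V2)"
  define Q where "Q = P - {x0}"
  have S: "1 \<le> S" using assms(2,3) by (simp add: S_def Suc_le_eq card_gt_0_iff)
  have deg_close: "\<And>x. x \<in> Q \<Longrightarrow> \<bar>real (deg E x) - real (deg E x0)\<bar> \<le> S"
    and diverge: "\<And>x y. x \<in> P \<Longrightarrow> y \<in> P \<Longrightarrow> x \<noteq> y \<Longrightarrow> eps * card V2 \<le> card (divg E x y)"
    using star by (auto simp: pair_star_def S_def Q_def)
  have fin_P: "finite P" and card_Q: "card Q = nat \<lfloor>S\<rfloor>"
    using pair_star_leaves[OF star] by (simp_all add: Q_def S_def)
  have "1 \<le> \<lfloor>S\<rfloor>" using S by simp
  then have eps_le_1: "eps \<le> 1"
    using pair_star_eps_le_1[OF star _ assms(2-4)] by (simp add: S_def)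
  have "eps * S / 12 \<le> S / 12" using eps_le_1 S by (simp add: mult_le_cancel_right1)
  also have "\<dots> \<le> card Q"
    using card_Q \<open>1 \<le> \<lfloor>S\<rfloor>\<close> real_of_int_floor_gt_diff_one[of S] by linarith
  finally have "eps * S / 12 \<le> card Q" .
  moreover have "0 \<le> eps * S / 12" using assms(1) S by simp
  ultimately obtain Q0 where Q0: "Q0 \<subseteq> Q" "real (card Q0) - 1 \<le> eps * S / 12" "eps * S / 12 \<le> card Q0"
    using obtain_subset_card_ceiling by metis
  define diffs where "diffs W = (\<lambda>x. int (degS E W x) - int (degS E W x0)) `
    {x \<in> Q0. \<bar>real_of_int (int (degS E W x) - int (degS E W x0))\<bar> \<le> 3 * sqrt (card V2)}" for W
  have "3 / 4 * 2 ^ card V2 \<le> card {W \<in> Pow V2. card Q0 \<le> 2 * card (diffs W)}"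
    unfolding diffs_def
  proof (rule card_Pow_many_distinct_degS_diffs[OF assms(2,4,1) eps_le_1 assms(3)])
    show "finite Q0" using Q0(1) fin_P finite_subset by (auto simp: Q_def)
    show "\<bar>real (deg E x) - real (deg E x0)\<bar> \<le> sqrt (card V2)" if "x \<in> Q0" for x
      using deg_close Q0(1) that unfolding S_def by blast
    show "eps * card V2 \<le> card (divg E x y)" if "x \<in> Q0" "y \<in> Q0" "x \<noteq> y" for x y
      using diverge Q0(1) that unfolding Q_def by blast
    show "12 * (real (card Q0) - 1) \<le> eps * sqrt (card V2)"
      using Q0(2) by (simp add: S_def field_simps)
  qed
  also have "\<dots> \<le> card {W. W \<subseteq> V2 \<and> eps / 24 * sqrt (card V2) \<le> card (AWP E V2 P x0 W)}"
  proof (intro of_nat_mono card_mono subsetI)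
    fix W assume "W \<in> {W \<in> Pow V2. card Q0 \<le> 2 * card (diffs W)}"
    moreover have "card (diffs W) \<le> card (AWP E V2 P x0 W)"
      unfolding diffs_def using fin_P Q0(1) unfolding Q_def by (rule card_good_diffs_le_card_AWP)
    ultimately show "W \<in> {W. W \<subseteq> V2 \<and> eps / 24 * sqrt (card V2) \<le> card (AWP E V2 P x0 W)}"
      using Q0(3) by (auto simp: S_def)
  qed (use assms(2) in simp)
  finally show ?thesis .
qed

theorem lemma3p3:
  fixes eps :: real
  assumes "eps > 0"
  shows "\<exists>\<delta>>0. \<forall>(V1 :: 'a set) (V2 :: 'b set) E P x0.
           finite V1 \<longrightarrow> finite V2 \<longrightarrow> E \<subseteq> V1 \<times> V2 \<longrightarrow>
           real (card V1) \<ge> real (card V2) / 2 \<longrightarrow>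
           pair_star eps V1 V2 E P x0 (nat \<lfloor>sqrt (real (card V2))\<rfloor>) \<longrightarrow>
           real (card {W. W \<subseteq> V2 \<and> real (card (AWP E V2 P x0 W)) \<ge> \<delta> * sqrt (real (card V2))})
             \<ge> 3 / 4 * 2 ^ card V2"
proof (intro exI[of _ "eps / 24"] conjI allI impI)
  show "0 < eps / 24" using assms by simp
  fix V1 :: "'a set" and V2 :: "'b set" and E P x0
  assume "finite V2" "E \<subseteq> V1 \<times> V2" and star: "pair_star eps V1 V2 E P x0 (nat \<lfloor>sqrt (card V2)\<rfloor>)"
  show "3 / 4 * 2 ^ card V2
      \<le> real (card {W. W \<subseteq> V2 \<and> eps / 24 * sqrt (card V2) \<le> real (card (AWP E V2 P x0 W))})"
  proof (cases "V2 = {}")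
    case True
    then have "{W. W \<subseteq> V2 \<and> eps / 24 * sqrt (card V2) \<le> real (card (AWP E V2 P x0 W))} = {{}}"
      by auto
    then show ?thesis using True by simp
  next
    case False
    then show ?thesis
      using card_Pow_AWP_large[OF assms \<open>finite V2\<close> False \<open>E \<subseteq> V1 \<times> V2\<close> star] by simp
  qed
qed

end
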